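(* Let $a,b$ be integers with $0<b<a$, let $S=\langle a,a+1,\ldots,a+b\rangle$ with conductor $c$, and let $m\ge 2c-1$. Let $M$ be an $(S,m,r)$-amenable set whose shadow $L_M$ has $t$ elements. Then there exists an $(S,m,r)$-amenable set $T$ whose shadow $L_T$ is an interval of integers containing $m$ and satisfies $\sharp L_T\le\sharp L_M$.
   Context: For $x\in S$, $\mathrm D(x)=\{\alpha\in S\mid x-\alpha\in S\}$. A set $M=\{m_1<\cdots<m_r\}\subseteq S$ with $2c-1\le m=m_1$ is $(S,m,r)$-amenable if $\mathrm D(m_i)\cap[m,\infty)\subseteq M$ for all $i$. The ground is $\{m,m+1,\ldots,m+a+b-1\}$, and the shadow of $M$ is $M\cap\{m,\ldots,m+a+b-1\}$. *)

theory Defs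
  imports Main
begin

inductive_set gen_semigroup :: "nat set \<Rightarrow> nat set" for G where
  zero: "0 \<in> gen_semigroup G"
| gen: "g \<in> G \<Longrightarrow> g \<in> gen_semigroup G"
| add: "x \<in> gen_semigroup G \<Longrightarrow> y \<in> gen_semigroup G \<Longrightarrow> x + y \<in> gen_semigroup G"

definition interval_semigroup :: "nat \<Rightarrow> nat \<Rightarrow> nat set" where
  "interval_semigroup a b = gen_semigroup {a..a+b}"

definition conductor :: "nat set \<Rightarrow> nat" where
  "conductor S = (LEAST c. \<forall>n\<ge>c. n \<in> S)"

definition Dset :: "nat set \<Rightarrow> nat \<Rightarrow> nat set" where
  "Dset S x = {\<alpha> \<in> S. \<alpha> \<le> x \<and> x - \<alpha> \<in> S}"

(* M = {m_1 < ... < m_r} subset of S, m = m_1, 2c-1 <= m, D(m_i) \<inter> [m,\<infinity>) \<subseteq> M *)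
definition amenable :: "nat set \<Rightarrow> nat \<Rightarrow> nat \<Rightarrow> nat set \<Rightarrow> bool" where
  "amenable S m r M \<longleftrightarrow>
     finite M \<and> card M = r \<and> M \<subseteq> S \<and> m \<in> M \<and> (\<forall>x\<in>M. m \<le> x) \<and>
     2 * conductor S \<le> m + 1 \<and>
     (\<forall>x\<in>M. Dset S x \<inter> {m..} \<subseteq> M)"

definition shadow :: "nat \<Rightarrow> nat \<Rightarrow> nat \<Rightarrow> nat set \<Rightarrow> nat set" where
  "shadow a b m M = M \<inter> {m..<m+a+b}"

end

theory Submission
  imports Defs
begin

text \<open>Write \<open>G = a + b\<close> and cut \<open>[m, \<infinity>)\<close> into blocks \<open>[m + qG, m + (q+1)G)\<close>; the \<open>q\<close>-th layer
of a set is the trace of its \<open>q\<close>-th block, shifted to \<open>{0..<G}\<close>. If \<open>M\<close> is closed under subtracting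
the generators \<open>a, \<dots>, a + b\<close> (which amenability gives once \<open>m\<close> exceeds the conductor), then subtracting
\<open>a + b - e\<close> maps layer \<open>q + 1\<close> shifted by \<open>e \<le> b\<close> (cyclically mod \<open>G\<close>) into layer \<open>q\<close>. Unless
layer \<open>q\<close> is all of \<open>\<int>/G\<close>, an interval sumset argument gives that the layers shrink by at least \<open>b\<close>
at each step, so the \<open>q\<close>-th layer of \<open>M\<close> has at most \<open>t - qb\<close> elements, \<open>t\<close> being the size of the
shadow. The staircase set whose \<open>q\<close>-th layer is exactly \<open>{0..<t - qb}\<close> is again closed, so it has
at least as many elements as \<open>M\<close> below any block boundary; its initial segment with \<open>r\<close> elements
is the required \<open>T\<close>, and its shadow is an initial interval of \<open>{m..<m + t}\<close>.\<close>

lemma gen_semigroup_intervalI: "a \<le> g \<Longrightarrow> g \<le> a + b \<Longrightarrow> g \<in> gen_semigroup {a..a+b}"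
  by (rule gen_semigroup.gen) simp

lemma mult_add_in_gen_semigroup:
  assumes "\<rho> \<le> k" "0 < b"
  shows "k * a + \<rho> \<in> gen_semigroup {a..a+b}"
  using assms(1)
proof (induction k arbitrary: \<rho>)
  case 0
  then show ?case by (simp add: gen_semigroup.zero)
next
  case (Suc k)
  show ?case
  proof (cases "\<rho> \<le> k")
    case True
    with Suc.IH have "k * a + \<rho> \<in> gen_semigroup {a..a+b}" .
    from gen_semigroup.add[OF this gen_semigroup_intervalI[of a a b]] show ?thesis
      by (simp add: ac_simps)
  next
    case False
    with Suc.prems have "\<rho> = Suc k" by simp
    moreover from Suc.IH have "k * a + k \<in> gen_semigroup {a..a+b}" by blast
    then have "(k * a + k) + (a + 1) \<in> gen_semigroup {a..a+b}"
      by (rule gen_semigroup.add) (rule gen_semigroup_intervalI, use assms(2) in auto)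
    ultimately show ?thesis by (simp add: ac_simps)
  qed
qed

lemma in_gen_semigroup_if_square_le:
  assumes "0 < a" "0 < b" "a * a \<le> n"
  shows "n \<in> gen_semigroup {a..a+b}"
proof -
  have "a \<le> n div a"
    using assms by (metis div_le_mono nonzero_mult_div_cancel_right not_gr0)
  then have "n mod a \<le> n div a"
    using assms(1) by (meson le_trans less_imp_le mod_less_divisor)
  from mult_add_in_gen_semigroup[OF this assms(2), where a=a] show ?thesis by simp
qed

lemma in_interval_semigroup_if_conductor_le:
  assumes "0 < a" "0 < b" "conductor (interval_semigroup a b) \<le> n"
  shows "n \<in> interval_semigroup a b"
proof -
  have "\<forall>n\<ge>conductor (interval_semigroup a b). n \<in> interval_semigroup a b"
    unfolding conductor_def
    by (rule LeastI_ex)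
      (use in_gen_semigroup_if_square_le[OF assms(1,2)] in \<open>auto simp: interval_semigroup_def\<close>)
  with assms(3) show ?thesis by blast
qed

definition down_closed :: "nat set \<Rightarrow> nat \<Rightarrow> nat set \<Rightarrow> bool" where
  "down_closed S m X \<longleftrightarrow> (\<forall>x\<in>X. \<forall>s\<in>S. m + s \<le> x \<longrightarrow> x - s \<in> X)"

lemma amenable_iff_down_closed:
  assumes "\<forall>n\<ge>m. n \<in> S"
  shows "amenable S m r X \<longleftrightarrow>
    finite X \<and> card X = r \<and> m \<in> X \<and> X \<subseteq> {m..} \<and> 2 * conductor S \<le> m + 1 \<and> down_closed S m X"
proof -
  have "(\<forall>x\<in>X. Dset S x \<inter> {m..} \<subseteq> X) \<longleftrightarrow> down_closed S m X" if "X \<subseteq> {m..}"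
  proof
    assume "\<forall>x\<in>X. Dset S x \<inter> {m..} \<subseteq> X"
    then show "down_closed S m X"
      using assms by (fastforce simp: down_closed_def Dset_def)
  next
    assume closed: "down_closed S m X"
    show "\<forall>x\<in>X. Dset S x \<inter> {m..} \<subseteq> X"
    proof (intro ballI subsetI)
      fix x \<alpha> assume "x \<in> X" "\<alpha> \<in> Dset S x \<inter> {m..}"
      then have "\<alpha> \<le> x" "x - \<alpha> \<in> S" "m + (x - \<alpha>) \<le> x" by (auto simp: Dset_def)
      with \<open>x \<in> X\<close> closed have "x - (x - \<alpha>) \<in> X" unfolding down_closed_def by blast
      with \<open>\<alpha> \<le> x\<close> show "\<alpha> \<in> X" by simp
    qed
  qed
  moreover have "X \<subseteq> {m..} \<Longrightarrow> X \<subseteq> S" using assms by auto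
  ultimately show ?thesis unfolding amenable_def by auto
qed

lemma down_closed_Int_atMost:
  "down_closed S m J \<Longrightarrow> down_closed S m (J \<inter> {m..K})"
  unfolding down_closed_def by auto

definition layer :: "nat \<Rightarrow> nat \<Rightarrow> nat set \<Rightarrow> nat \<Rightarrow> nat set" where
  "layer m G X q = {x. x < G \<and> m + q * G + x \<in> X}"

lemma finite_layer [simp]: "finite (layer m G X q)"
  unfolding layer_def by auto

lemma card_Int_blocks:
  "card (X \<inter> {m..<m + Q * G}) = (\<Sum>q<Q. card (layer m G X q))"
proof (induction Q)
  case 0
  then show ?case by simp
next
  case (Suc Q)
  have split: "X \<inter> {m..<m + Suc Q * G} = X \<inter> {m..<m + Q * G} \<union> X \<inter> {m + Q * G..<m + Q * G + G}"
    by auto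
  have "X \<inter> {m + Q * G..<m + Q * G + G} = (+) (m + Q * G) ` layer m G X Q"
  proof (intro set_eqI iffI)
    fix y assume "y \<in> X \<inter> {m + Q * G..<m + Q * G + G}"
    then show "y \<in> (+) (m + Q * G) ` layer m G X Q"
      unfolding layer_def by (intro image_eqI[of _ _ "y - (m + Q * G)"]) auto
  qed (auto simp: layer_def)
  then have "card (X \<inter> {m + Q * G..<m + Q * G + G}) = card (layer m G X Q)"
    by (simp add: card_image)
  then show ?case
    unfolding split using Suc.IH by (subst card_Un_disjoint) auto
qed

lemma mod_shifts_cover_if_closed_under_Suc:
  fixes C :: "nat set"
  assumes closed: "\<forall>y\<in>C. (y + 1) mod G \<in> C" and "x\<^sub>0 \<in> C" "x\<^sub>0 < G"
  shows "{..<G} \<subseteq> C"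
proof
  have shifts: "(x\<^sub>0 + n) mod G \<in> C" for n
  proof (induction n)
    case 0
    then show ?case using assms(2,3) by simp
  next
    case (Suc n)
    with closed have "((x\<^sub>0 + n) mod G + 1) mod G \<in> C" by blast
    then show ?case by (simp add: mod_Suc_eq)
  qed
  fix y assume "y \<in> {..<G}"
  then have "(x\<^sub>0 + (G - x\<^sub>0 + y)) mod G = y" using assms(3) by simp
  then show "y \<in> C" using shifts by metis
qed

text \<open>An interval sumset bound in \<open>\<int>/G\<close>: unless \<open>B + {0..k}\<close> already is everything, it is not
closed under \<open>+1\<close> and hence strictly grows from \<open>k\<close> to \<open>k + 1\<close>.\<close>

lemma card_add_le_if_mod_shifts_subset:
  fixes A B :: "nat set"
  assumes "B \<subseteq> {..<G}" "A \<subseteq> {..<G}" "B \<noteq> {}" "card A < G"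
    and shifts: "\<forall>x\<in>B. \<forall>e\<le>b. (x + e) mod G \<in> A"
  shows "card B + b \<le> card A"
proof -
  define C where "C k = {(x + e) mod G | x e. x \<in> B \<and> e \<le> k}" for k
  have "0 < G" using assms(1,3) by auto
  then have C_bounded: "C k \<subseteq> {..<G}" for k unfolding C_def by auto
  then have finite_C: "finite (C k)" for k using finite_subset by blast
  have C_subset_A: "k \<le> b \<Longrightarrow> C k \<subseteq> A" for k using shifts unfolding C_def by auto
  have C_0: "C 0 = B"
    using assms(1) unfolding C_def by force
  have "card B + k \<le> card (C k)" if "k \<le> b" for k
    using that
  proof (induction k)
    case 0
    then show ?case using C_0 by simp
  next
    case (Suc k)
    have mono: "C k \<subseteq> C (Suc k)" unfolding C_def by fastforce
    have "C k \<noteq> C (Suc k)"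
    proof
      assume eq: "C k = C (Suc k)"
      have "\<forall>y\<in>C k. (y + 1) mod G \<in> C k"
      proof
        fix y assume "y \<in> C k"
        then obtain x e where "x \<in> B" "e \<le> k" "y = (x + e) mod G" unfolding C_def by blast
        then have "(y + 1) mod G \<in> C (Suc k)"
          unfolding C_def by (force simp: mod_Suc_eq)
        with eq show "(y + 1) mod G \<in> C k" by simp
      qed
      moreover obtain x\<^sub>0 where "x\<^sub>0 \<in> B" using assms(3) by blast
      moreover have "C 0 \<subseteq> C k" unfolding C_def by fastforce
      ultimately have "{..<G} \<subseteq> C k"
        using mod_shifts_cover_if_closed_under_Suc assms(1) C_0 by blast
      moreover have "C k \<subseteq> A" using C_subset_A Suc.prems by simp
      ultimately have "{..<G} \<subseteq> A" by blast
      then have "G \<le> card A"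
        using assms(2) by (metis card_lessThan card_mono finite_lessThan finite_subset)
      with assms(4) show False by simp
    qed
    with mono finite_C have "card (C k) < card (C (Suc k))" by (simp add: psubset_card_mono)
    with Suc show ?case by simp
  qed
  then have "card B + b \<le> card (C b)" by simp
  also have "\<dots> \<le> card A"
    using C_subset_A[of b] assms(2) by (meson card_mono finite_lessThan finite_subset order_refl)
  finally show ?thesis .
qed

locale generator_closed =
  fixes a b m :: nat and X :: "nat set"
  assumes diff_generator: "\<lbrakk>x \<in> X; a \<le> g; g \<le> a + b; m + g \<le> x\<rbrakk> \<Longrightarrow> x - g \<in> X"
begin

lemma layer_Suc_subset: "layer m (a + b) X (Suc q) \<subseteq> layer m (a + b) X q"
proof
  fix x assume "x \<in> layer m (a + b) X (Suc q)"
  then have "x < a + b" "m + Suc q * (a + b) + x \<in> X" unfolding layer_def by auto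
  moreover from diff_generator[OF this(2), of "a + b"]
  have "m + Suc q * (a + b) + x - (a + b) \<in> X" by simp
  ultimately show "x \<in> layer m (a + b) X q" unfolding layer_def by (simp add: algebra_simps)
qed

lemma layer_subset_layer_0: "layer m (a + b) X q \<subseteq> layer m (a + b) X 0"
  by (induction q) (use layer_Suc_subset in auto)

text \<open>Subtracting the generator \<open>a + b - e\<close> moves \<open>m + (q+1)(a+b) + x\<close> to \<open>m + q(a+b) + (x + e)\<close>;
when \<open>x + e\<close> overflows the block it lands in layer \<open>q + 1\<close>, which is contained in layer \<open>q\<close>.\<close>

lemma mod_shift_layer_Suc:
  assumes "x \<in> layer m (a + b) X (Suc q)" "e \<le> b"
  shows "(x + e) mod (a + b) \<in> layer m (a + b) X q"
proof -
  from assms(1) have x: "x < a + b" "m + Suc q * (a + b) + x \<in> X" unfolding layer_def by auto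
  have "m + Suc q * (a + b) + x - (a + (b - e)) \<in> X"
    by (rule diff_generator[OF x(2)]) auto
  moreover have "m + Suc q * (a + b) + x - (a + (b - e)) = m + q * (a + b) + (x + e)"
    using assms(2) by (simp add: algebra_simps)
  ultimately have shifted: "m + q * (a + b) + (x + e) \<in> X" by simp
  show ?thesis
  proof (cases "x + e < a + b")
    case True
    with shifted show ?thesis unfolding layer_def by simp
  next
    case False
    have "x + e - (a + b) < a + b" using x(1) assms(2) by simp
    moreover have "m + Suc q * (a + b) + (x + e - (a + b)) \<in> X"
      using shifted False by (simp add: algebra_simps)
    ultimately have "x + e - (a + b) \<in> layer m (a + b) X q"
      using layer_Suc_subset unfolding layer_def by blast
    moreover have "(x + e) mod (a + b) = x + e - (a + b)"
      using False \<open>x + e - (a + b) < a + b\<close> by (simp add: le_mod_geq)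
    ultimately show ?thesis by simp
  qed
qed

lemma card_layer_le:
  assumes "card (layer m (a + b) X 0) < a + b"
  shows "card (layer m (a + b) X q) \<le> card (layer m (a + b) X 0) - q * b"
proof (induction q)
  case 0
  then show ?case by simp
next
  case (Suc q)
  show ?case
  proof (cases "layer m (a + b) X (Suc q) = {}")
    case True
    then show ?thesis by simp
  next
    case False
    have "card (layer m (a + b) X (Suc q)) + b \<le> card (layer m (a + b) X q)"
    proof (rule card_add_le_if_mod_shifts_subset)
      show "card (layer m (a + b) X q) < a + b"
        using card_mono[OF finite_layer layer_subset_layer_0[of q]] assms by simp
    qed (use False mod_shift_layer_Suc in \<open>auto simp: layer_def\<close>)
    with Suc.IH show ?thesis by simp
  qed
qed

end

lemma down_closed_imp_generator_closed:
  "down_closed (gen_semigroup {a..a+b}) m X \<Longrightarrow> generator_closed a b m X"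
  unfolding down_closed_def generator_closed_def by (auto simp: add.commute gen_semigroup_intervalI)

definition block_weight :: "nat \<Rightarrow> nat \<Rightarrow> nat \<Rightarrow> nat" where
  "block_weight G b d = d mod G + d div G * b"

definition staircase :: "nat \<Rightarrow> nat \<Rightarrow> nat \<Rightarrow> nat \<Rightarrow> nat set" where
  "staircase a b m t = {y. m \<le> y \<and> block_weight (a + b) b (y - m) < t}"

lemma block_weight_mult_add: "x < G \<Longrightarrow> block_weight G b (q * G + x) = x + q * b"
  unfolding block_weight_def by simp

lemma block_weight_le_add_generator:
  assumes "a \<le> g" "g \<le> a + b"
  shows "block_weight (a + b) b d \<le> block_weight (a + b) b (d + g)"
proof (cases "a + b = 0")
  case True
  with assms show ?thesis by simp
next
  case False
  define q x where "q = d div (a + b)" and "x = d mod (a + b)"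
  have "x < a + b" using False unfolding x_def by simp
  have d: "d = q * (a + b) + x" unfolding q_def x_def using div_mult_mod_eq[of d "a + b"] by simp
  have weight_d: "block_weight (a + b) b d = x + q * b"
    unfolding d using \<open>x < a + b\<close> by (rule block_weight_mult_add)
  show ?thesis
  proof (cases "x + g < a + b")
    case True
    have "d + g = q * (a + b) + (x + g)" using d by simp
    then have "block_weight (a + b) b (d + g) = x + g + q * b"
      using True by (simp only: block_weight_mult_add)
    with weight_d show ?thesis by simp
  next
    case False
    then have "d + g = Suc q * (a + b) + (x + g - (a + b))" using d by simp
    moreover have "x + g - (a + b) < a + b" using \<open>x < a + b\<close> assms by simp
    ultimately have "block_weight (a + b) b (d + g) = x + g - (a + b) + Suc q * b"
      by (simp only: block_weight_mult_add)
    with weight_d False assms(1) show ?thesis by simp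
  qed
qed

lemma block_weight_le_add:
  "g \<in> gen_semigroup {a..a+b} \<Longrightarrow> block_weight (a + b) b d \<le> block_weight (a + b) b (d + g)"
proof (induction arbitrary: d rule: gen_semigroup.induct)
  case zero
  then show ?case by simp
next
  case (gen g)
  then show ?case by (simp add: block_weight_le_add_generator)
next
  case (add x y)
  then show ?case by (metis add.assoc le_trans)
qed

lemma down_closed_staircase: "down_closed (gen_semigroup {a..a+b}) m (staircase a b m t)"
  unfolding down_closed_def staircase_def
proof (intro ballI impI, clarify)
  fix y s assume "s \<in> gen_semigroup {a..a+b}" "m + s \<le> y" "block_weight (a + b) b (y - m) < t"
  moreover from block_weight_le_add[OF this(1), of "y - s - m"] this(2)
  have "block_weight (a + b) b (y - s - m) \<le> block_weight (a + b) b (y - m)" by simp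
  ultimately show "m \<le> y - s \<and> block_weight (a + b) b (y - s - m) < t" by simp
qed

lemma layer_staircase:
  assumes "t \<le> a + b"
  shows "layer m (a + b) (staircase a b m t) q = {..<t - q * b}"
proof -
  have "block_weight (a + b) b (m + q * (a + b) + x - m) = x + q * b" if "x < a + b" for x
    using block_weight_mult_add[OF that] by simp
  then have "x \<in> layer m (a + b) (staircase a b m t) q \<longleftrightarrow> x < a + b \<and> x + q * b < t" for x
    unfolding layer_def staircase_def by auto
  moreover have "x < a + b \<and> x + q * b < t \<longleftrightarrow> x < t - q * b" for x
    using assms by linarith
  ultimately show ?thesis by (simp add: set_eq_iff)
qed

lemma shadow_staircase:
  assumes "t \<le> a + b"
  shows "shadow a b m (staircase a b m t) = {m..<m + t}"
proof -
  have "block_weight (a + b) b d = d" if "d < a + b" for d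
    using block_weight_mult_add[OF that, of b 0] by simp
  then have "y \<in> shadow a b m (staircase a b m t) \<longleftrightarrow> m \<le> y \<and> y < m + t" for y
    using assms by (auto simp: shadow_def staircase_def)
  then show ?thesis by (simp add: set_eq_iff)
qed

lemma (in generator_closed) card_Int_blocks_le_staircase:
  assumes "card (layer m (a + b) X 0) < a + b"
  shows "card (X \<inter> {m..<m + Q * (a + b)})
    \<le> card (staircase a b m (card (layer m (a + b) X 0)) \<inter> {m..<m + Q * (a + b)})"
    (is "_ \<le> card (staircase a b m ?t \<inter> _)")
proof -
  have "card (X \<inter> {m..<m + Q * (a + b)}) = (\<Sum>q<Q. card (layer m (a + b) X q))"
    by (rule card_Int_blocks)
  also have "\<dots> \<le> (\<Sum>q<Q. card {..<?t - q * b})"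
    by (rule sum_mono) (use card_layer_le[OF assms] in simp)
  also have "\<dots> = card (staircase a b m ?t \<inter> {m..<m + Q * (a + b)})"
    using assms by (simp add: card_Int_blocks layer_staircase)
  finally show ?thesis .
qed

lemma amenable_Int_atLeastAtMost:
  assumes "\<forall>n\<ge>m. n \<in> S" "2 * conductor S \<le> m + 1"
    and "J \<subseteq> {m..}" "m \<in> J" "down_closed S m J"
    and "1 \<le> r" "r \<le> card (J \<inter> {m..<N})"
  obtains K where "m \<le> K" "amenable S m r (J \<inter> {m..K})"
proof -
  define f where "f K = int (card (J \<inter> {m..K}))" for K
  have "\<bar>f (Suc K) - f K\<bar> \<le> 1" for K
  proof -
    have "card (J \<inter> {m..K}) \<le> card (J \<inter> {m..Suc K})"
      by (rule card_mono) auto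
    moreover have "card (J \<inter> {m..Suc K}) \<le> card (insert (Suc K) (J \<inter> {m..K}))"
      by (rule card_mono) auto
    ultimately show ?thesis
      unfolding f_def by (simp add: card_insert_if split: if_splits)
  qed
  moreover have "f m = 1"
    using \<open>m \<in> J\<close> unfolding f_def by (simp add: Int_insert_left)
  moreover have "card (J \<inter> {m..<N}) \<le> card (J \<inter> {m..N})"
    by (rule card_mono) auto
  then have "int r \<le> f N"
    using assms(7) unfolding f_def by simp
  moreover have "m \<le> N"
    using assms(6,7) by (cases "m \<le> N") auto
  ultimately obtain K where "m \<le> K" "f K = int r"
    using nat_intermed_int_val[of m N f "int r"] assms(6) by auto
  moreover have "down_closed S m (J \<inter> {m..K})"
    using assms(5) by (rule down_closed_Int_atMost)
  ultimately show ?thesis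
    using that assms(1-4) by (auto simp: amenable_iff_down_closed f_def)
qed

lemma card_shadow_eq_card_layer_0: "card (shadow a b m X) = card (layer m (a + b) X 0)"
proof -
  have "shadow a b m X = (+) m ` layer m (a + b) X 0"
  proof (intro set_eqI iffI)
    fix y assume "y \<in> shadow a b m X"
    then show "y \<in> (+) m ` layer m (a + b) X 0"
      unfolding shadow_def layer_def by (intro image_eqI[of _ _ "y - m"]) auto
  qed (auto simp: shadow_def layer_def)
  then show ?thesis by (simp add: card_image)
qed

text \<open>The extremal closed set: all of \<open>[m, \<infinity>)\<close> if the shadow of \<open>M\<close> is full, the staircase otherwise.\<close>

lemma obtain_down_closed_with_interval_shadow:
  fixes a b m r :: nat and M :: "nat set"
  defines "S \<equiv> gen_semigroup {a..a+b}"
  assumes "0 < b" "\<forall>n\<ge>m. n \<in> S" "amenable S m r M"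
  obtains J N where "J \<subseteq> {m..}" "m \<in> J" "down_closed S m J"
    "shadow a b m J = {m..<m + card (shadow a b m M)}" "r \<le> card (J \<inter> {m..<N})"
proof -
  define t where "t = card (shadow a b m M)"
  from assms(3,4) have "finite M" "card M = r" "m \<in> M" "M \<subseteq> {m..}" "down_closed S m M"
    by (auto simp: amenable_iff_down_closed)
  have "t \<le> a + b"
    unfolding t_def shadow_def using card_mono[of "{m..<m+a+b}" "M \<inter> {m..<m+a+b}"] by auto
  show thesis
  proof (cases "t = a + b")
    case True
    have "down_closed S m {m..}" unfolding down_closed_def by auto
    moreover have "shadow a b m {m..} = {m..<m + t}" using True by (auto simp: shadow_def)
    moreover have "{m..} \<inter> {m..<m + r} = {m..<m + r}" by auto
    ultimately show thesis
      using that[of "{m..}" "m + r"] unfolding t_def by simp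
  next
    case False
    with \<open>t \<le> a + b\<close> have "t < a + b" by simp
    have "m \<in> shadow a b m M" using \<open>m \<in> M\<close> assms(2) by (simp add: shadow_def)
    then have "0 < t" unfolding t_def shadow_def by (auto simp: card_gt_0_iff)
    then have "m \<in> staircase a b m t" by (simp add: staircase_def block_weight_def)
    define Q where "Q = Suc (Max M)"
    have "M \<subseteq> {m..<m + Q * (a + b)}"
    proof
      fix x assume "x \<in> M"
      then have "x < Q" using \<open>finite M\<close> unfolding Q_def by (simp add: le_imp_less_Suc)
      also have "Q \<le> Q * (a + b)" using assms(2) by simp
      finally show "x \<in> {m..<m + Q * (a + b)}" using \<open>x \<in> M\<close> \<open>M \<subseteq> {m..}\<close> by auto
    qed
    then have "r = card (M \<inter> {m..<m + Q * (a + b)})"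
      using \<open>card M = r\<close> by (simp add: Int_absorb2)
    also have "\<dots> \<le> card (staircase a b m t \<inter> {m..<m + Q * (a + b)})"
      using generator_closed.card_Int_blocks_le_staircase[of a b m M Q]
        down_closed_imp_generator_closed \<open>down_closed S m M\<close> \<open>t < a + b\<close>
      unfolding S_def t_def card_shadow_eq_card_layer_0 by blast
    finally show thesis
      using that[of "staircase a b m t"] \<open>m \<in> staircase a b m t\<close> \<open>t < a + b\<close>
        down_closed_staircase[of a b m t] shadow_staircase[of t a b m]
      unfolding S_def t_def by (auto simp: staircase_def)
  qed
qed

theorem proposition4p26:
  fixes a b m r :: nat and M :: "nat set"
  assumes "0 < b" and "b < a"
    and "2 * conductor (interval_semigroup a b) \<le> m + 1"
    and "amenable (interval_semigroup a b) m r M"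
  shows "\<exists>T. amenable (interval_semigroup a b) m r T \<and>
             (\<exists>k. m \<le> k \<and> shadow a b m T = {m..k}) \<and>
             card (shadow a b m T) \<le> card (shadow a b m M)"
proof -
  let ?S = "interval_semigroup a b" and ?t = "card (shadow a b m M)"
  have "0 < a" using assms(1,2) by simp
  have "conductor ?S \<le> m" using assms(3) by linarith
  then have S_ge: "\<forall>n\<ge>m. n \<in> ?S"
    by (blast intro: in_interval_semigroup_if_conductor_le[OF \<open>0 < a\<close> assms(1)] le_trans)
  obtain J N where J: "J \<subseteq> {m..}" "m \<in> J" "down_closed ?S m J"
      "shadow a b m J = {m..<m + ?t}" "r \<le> card (J \<inter> {m..<N})"
    using obtain_down_closed_with_interval_shadow[where a = a and b = b, folded interval_semigroup_def,
        OF assms(1) S_ge assms(4)] by blast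
  have "finite M" "card M = r" "m \<in> M" using assms(4) by (simp_all add: amenable_def)
  then have "1 \<le> r" by (auto simp: Suc_le_eq card_gt_0_iff)
  then obtain K where "m \<le> K" and T: "amenable ?S m r (J \<inter> {m..K})"
    using amenable_Int_atLeastAtMost[OF S_ge assms(3) J(1-3)] J(5) by blast
  have "m \<in> shadow a b m J" using J(2) assms(1) by (simp add: shadow_def)
  then have "0 < ?t" using J(4) by simp
  have "shadow a b m (J \<inter> {m..K}) = {m..<m + ?t} \<inter> {m..K}"
    using J(4) by (auto simp: shadow_def)
  also have "\<dots> = {m..min K (m + ?t - 1)}"
    using \<open>0 < ?t\<close> by (auto simp: set_eq_iff)
  finally have "shadow a b m (J \<inter> {m..K}) = {m..min K (m + ?t - 1)}" .
  moreover have "card {m..min K (m + ?t - 1)} \<le> ?t" using \<open>0 < ?t\<close> by (simp add: min_def) arith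
  moreover have "m \<le> min K (m + ?t - 1)" using \<open>m \<le> K\<close> \<open>0 < ?t\<close> by simp
  ultimately show ?thesis using T by (intro exI[of _ "J \<inter> {m..K}"]) auto
qed

end
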